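(* Let $\mathcal C$ be an abelian category and let $\mathcal S,\mathcal T$ be subcategories of $\mathcal C$ containing the zero object. Then: (a) $(\mathcal S\mathcal T)_{\rm sub}\subseteq(\mathcal S)_{\rm sub}(\mathcal T)_{\rm sub}$; (b) $(\mathcal S\mathcal T)_{\rm quot}\subseteq(\mathcal S)_{\rm quot}(\mathcal T)_{\rm quot}$; (c) the conditions (i) $(\mathcal S\mathcal T)_{\rm ext}\subseteq(\mathcal S)_{\rm ext}(\mathcal T)_{\rm ext}$ and (ii) $(\mathcal T\mathcal S)_{\rm ext}\subseteq(\mathcal S)_{\rm ext}(\mathcal T)_{\rm ext}$ are equivalent; and if $\mathcal T$ is closed under extensions, they are also equivalent to (iii) $\mathcal T\mathcal S\subseteq(\mathcal S)_{\rm ext}\mathcal T$.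
   Context: For subcategories $\mathcal X,\mathcal Y$ of $\mathcal C$, $\mathcal X\mathcal Y$ is the class of objects $M$ admitting a short exact sequence $0\to L\to M\to N\to 0$ with $L\in\mathcal X$, $N\in\mathcal Y$. $(\mathcal X)_{\rm sub}$ (resp. $(\mathcal X)_{\rm quot}$) is the smallest subcategory containing $\mathcal X$ closed under subobjects (resp. quotient objects), i.e. all subobjects (resp. quotients) of objects of $\mathcal X$. $\mathcal X^0=\{0\}$, $\mathcal X^n=\mathcal X^{n-1}\mathcal X$, and $(\mathcal X)_{\rm ext}=\bigcup_{n\geq0}\mathcal X^n$, the smallest subcategory containing $\mathcal X$ closed under extensions; $\mathcal X$ is closed under extensions if $\mathcal X\mathcal X=\mathcal X$. *)

theory Defs
  imports Main
begin

text \<open>A category presented by its class of objects, hom-sets, composition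
  (cmp g f is g after f) and identities.\<close>

record ('o, 'm) category =
  obj :: "'o set"
  hom :: "'o \<Rightarrow> 'o \<Rightarrow> 'm set"
  cmp :: "'m \<Rightarrow> 'm \<Rightarrow> 'm"
  idm :: "'o \<Rightarrow> 'm"

definition is_category :: "('o, 'm, 'x) category_scheme \<Rightarrow> bool" where
  "is_category C \<longleftrightarrow>
     (\<forall>A\<in>obj C. idm C A \<in> hom C A A) \<and>
     (\<forall>A\<in>obj C. \<forall>B\<in>obj C. \<forall>D\<in>obj C. \<forall>f g.
        f \<in> hom C A B \<longrightarrow> g \<in> hom C B D \<longrightarrow> cmp C g f \<in> hom C A D) \<and>
     (\<forall>A\<in>obj C. \<forall>B\<in>obj C. \<forall>f. f \<in> hom C A B \<longrightarrow>
        cmp C (idm C B) f = f \<and> cmp C f (idm C A) = f) \<and>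
     (\<forall>A\<in>obj C. \<forall>B\<in>obj C. \<forall>D\<in>obj C. \<forall>E\<in>obj C. \<forall>f g h.
        f \<in> hom C A B \<longrightarrow> g \<in> hom C B D \<longrightarrow> h \<in> hom C D E \<longrightarrow>
        cmp C h (cmp C g f) = cmp C (cmp C h g) f)"

definition is_mono :: "('o, 'm, 'x) category_scheme \<Rightarrow> 'm \<Rightarrow> 'o \<Rightarrow> 'o \<Rightarrow> bool" where
  "is_mono C f A B \<longleftrightarrow> A \<in> obj C \<and> B \<in> obj C \<and> f \<in> hom C A B \<and>
     (\<forall>X\<in>obj C. \<forall>g h. g \<in> hom C X A \<longrightarrow> h \<in> hom C X A \<longrightarrow>
        cmp C f g = cmp C f h \<longrightarrow> g = h)"

definition is_epi :: "('o, 'm, 'x) category_scheme \<Rightarrow> 'm \<Rightarrow> 'o \<Rightarrow> 'o \<Rightarrow> bool" where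
  "is_epi C f A B \<longleftrightarrow> A \<in> obj C \<and> B \<in> obj C \<and> f \<in> hom C A B \<and>
     (\<forall>X\<in>obj C. \<forall>g h. g \<in> hom C B X \<longrightarrow> h \<in> hom C B X \<longrightarrow>
        cmp C g f = cmp C h f \<longrightarrow> g = h)"

definition is_zero_obj :: "('o, 'm, 'x) category_scheme \<Rightarrow> 'o \<Rightarrow> bool" where
  "is_zero_obj C Z \<longleftrightarrow> Z \<in> obj C \<and>
     (\<forall>X\<in>obj C. (\<exists>!f. f \<in> hom C Z X) \<and> (\<exists>!f. f \<in> hom C X Z))"

definition is_zero_mor :: "('o, 'm, 'x) category_scheme \<Rightarrow> 'm \<Rightarrow> 'o \<Rightarrow> 'o \<Rightarrow> bool" where
  "is_zero_mor C f A B \<longleftrightarrow> f \<in> hom C A B \<and>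
     (\<exists>Z g h. is_zero_obj C Z \<and> g \<in> hom C A Z \<and> h \<in> hom C Z B \<and> f = cmp C h g)"

definition is_kernel :: "('o, 'm, 'x) category_scheme \<Rightarrow> 'm \<Rightarrow> 'o \<Rightarrow> 'o \<Rightarrow> 'm \<Rightarrow> 'o \<Rightarrow> bool" where
  "is_kernel C k K A g B \<longleftrightarrow> K \<in> obj C \<and> A \<in> obj C \<and> B \<in> obj C \<and>
     k \<in> hom C K A \<and> g \<in> hom C A B \<and> is_zero_mor C (cmp C g k) K B \<and>
     (\<forall>X\<in>obj C. \<forall>u. u \<in> hom C X A \<longrightarrow> is_zero_mor C (cmp C g u) X B \<longrightarrow>
        (\<exists>!v. v \<in> hom C X K \<and> cmp C k v = u))"

definition is_cokernel :: "('o, 'm, 'x) category_scheme \<Rightarrow> 'm \<Rightarrow> 'o \<Rightarrow> 'o \<Rightarrow> 'm \<Rightarrow> 'o \<Rightarrow> bool" where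
  "is_cokernel C c B Q g A \<longleftrightarrow> A \<in> obj C \<and> B \<in> obj C \<and> Q \<in> obj C \<and>
     c \<in> hom C B Q \<and> g \<in> hom C A B \<and> is_zero_mor C (cmp C c g) A Q \<and>
     (\<forall>X\<in>obj C. \<forall>u. u \<in> hom C B X \<longrightarrow> is_zero_mor C (cmp C u g) A X \<longrightarrow>
        (\<exists>!v. v \<in> hom C Q X \<and> cmp C v c = u))"

definition has_product :: "('o, 'm, 'x) category_scheme \<Rightarrow> 'o \<Rightarrow> 'o \<Rightarrow> bool" where
  "has_product C A B \<longleftrightarrow> (\<exists>P\<in>obj C. \<exists>p1 p2. p1 \<in> hom C P A \<and> p2 \<in> hom C P B \<and>
     (\<forall>X\<in>obj C. \<forall>f g. f \<in> hom C X A \<longrightarrow> g \<in> hom C X B \<longrightarrow>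
        (\<exists>!h. h \<in> hom C X P \<and> cmp C p1 h = f \<and> cmp C p2 h = g)))"

definition has_coproduct :: "('o, 'm, 'x) category_scheme \<Rightarrow> 'o \<Rightarrow> 'o \<Rightarrow> bool" where
  "has_coproduct C A B \<longleftrightarrow> (\<exists>P\<in>obj C. \<exists>i1 i2. i1 \<in> hom C A P \<and> i2 \<in> hom C B P \<and>
     (\<forall>X\<in>obj C. \<forall>f g. f \<in> hom C A X \<longrightarrow> g \<in> hom C B X \<longrightarrow>
        (\<exists>!h. h \<in> hom C P X \<and> cmp C h i1 = f \<and> cmp C h i2 = g)))"

text \<open>Abelian category (Freyd / Mac Lane VIII.3 form): zero object, binary
  products and coproducts, kernels and cokernels of all morphisms, every
  monomorphism is a kernel and every epimorphism is a cokernel.\<close>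
definition abelian_category :: "('o, 'm, 'x) category_scheme \<Rightarrow> bool" where
  "abelian_category C \<longleftrightarrow> is_category C \<and>
     (\<exists>Z. is_zero_obj C Z) \<and>
     (\<forall>A\<in>obj C. \<forall>B\<in>obj C. has_product C A B \<and> has_coproduct C A B) \<and>
     (\<forall>A\<in>obj C. \<forall>B\<in>obj C. \<forall>f. f \<in> hom C A B \<longrightarrow>
        (\<exists>K k. is_kernel C k K A f B) \<and> (\<exists>Q c. is_cokernel C c B Q f A)) \<and>
     (\<forall>A\<in>obj C. \<forall>B\<in>obj C. \<forall>f. is_mono C f A B \<longrightarrow> (\<exists>D g. is_kernel C f A B g D)) \<and>
     (\<forall>A\<in>obj C. \<forall>B\<in>obj C. \<forall>f. is_epi C f A B \<longrightarrow> (\<exists>D g. is_cokernel C f A B g D))"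

definition short_exact :: "('o, 'm, 'x) category_scheme \<Rightarrow> 'o \<Rightarrow> 'm \<Rightarrow> 'o \<Rightarrow> 'm \<Rightarrow> 'o \<Rightarrow> bool" where
  "short_exact C L f M g N \<longleftrightarrow> is_kernel C f L M g N \<and> is_cokernel C g M N f L"

text \<open>Subcategories are represented by their classes of objects.\<close>
definition cls_mult :: "('o, 'm, 'x) category_scheme \<Rightarrow> 'o set \<Rightarrow> 'o set \<Rightarrow> 'o set" where
  "cls_mult C X Y = {M \<in> obj C. \<exists>L N f g. L \<in> X \<and> N \<in> Y \<and> short_exact C L f M g N}"

definition cls_sub :: "('o, 'm, 'x) category_scheme \<Rightarrow> 'o set \<Rightarrow> 'o set" where
  "cls_sub C X = {M' \<in> obj C. \<exists>M\<in>X. \<exists>f. is_mono C f M' M}"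

definition cls_quot :: "('o, 'm, 'x) category_scheme \<Rightarrow> 'o set \<Rightarrow> 'o set" where
  "cls_quot C X = {M' \<in> obj C. \<exists>M\<in>X. \<exists>f. is_epi C f M M'}"

fun cls_pow :: "('o, 'm, 'x) category_scheme \<Rightarrow> 'o set \<Rightarrow> nat \<Rightarrow> 'o set" where
  "cls_pow C X 0 = {Z. is_zero_obj C Z}"
| "cls_pow C X (Suc n) = cls_mult C (cls_pow C X n) X"

definition cls_ext :: "('o, 'm, 'x) category_scheme \<Rightarrow> 'o set \<Rightarrow> 'o set" where
  "cls_ext C X = (\<Union>n. cls_pow C X n)"

definition ext_closed :: "('o, 'm, 'x) category_scheme \<Rightarrow> 'o set \<Rightarrow> bool" where
  "ext_closed C X \<longleftrightarrow> cls_mult C X X = X"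

end

theory Submission
  imports Defs
begin

text \<open>
  (a) A subobject \<open>M'\<close> of an extension \<open>0 \<rightarrow> L \<rightarrow> M \<rightarrow> N \<rightarrow> 0\<close> is an extension of
  \<open>L' = ker (M' \<rightarrow> N)\<close>, a subobject of \<open>L\<close>, by \<open>M'/L'\<close>, which is the image of
  \<open>M' \<rightarrow> N\<close> and hence a subobject of \<open>N\<close>. (b) is (a) in the opposite category.
  (c) Both \<open>ST\<close> and \<open>TS\<close> contain \<open>S\<close> and \<open>T\<close> (extensions by zero objects), so they
  generate the same extension-closed class; this gives (i) \<open>\<longleftrightarrow>\<close> (ii). The product of
  classes is associative (Noether isomorphism \<open>(M/X)/(A/X) \<cong> M/A\<close>). Hence, if \<open>T\<close> is
  closed under extensions and \<open>TS \<subseteq> (S)\<^sub>e\<^sub>x\<^sub>t T\<close>, induction on the length of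
  an \<open>S\<close>-filtration gives \<open>T (S)\<^sub>e\<^sub>x\<^sub>t \<subseteq> (S)\<^sub>e\<^sub>x\<^sub>t T\<close>, so \<open>(S)\<^sub>e\<^sub>x\<^sub>t T\<close> is
  closed under extensions; containing \<open>ST\<close>, it contains \<open>(ST)\<^sub>e\<^sub>x\<^sub>t\<close>, which is
  (iii) \<open>\<longrightarrow>\<close> (i).
\<close>

section \<open>Duality\<close>

definition opposite_cat :: "('o, 'm) category \<Rightarrow> ('o, 'm) category" where
  "opposite_cat C = \<lparr>obj = obj C, hom = (\<lambda>A B. hom C B A), cmp = (\<lambda>g f. cmp C f g), idm = idm C\<rparr>"

lemma opposite_cat_simps [simp]:
  "obj (opposite_cat C) = obj C"
  "hom (opposite_cat C) A B = hom C B A"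
  "cmp (opposite_cat C) g f = cmp C f g"
  "idm (opposite_cat C) = idm C"
  by (simp_all add: opposite_cat_def)

lemma is_mono_opposite [simp]: "is_mono (opposite_cat C) f A B \<longleftrightarrow> is_epi C f B A"
  by (auto simp: is_mono_def is_epi_def)

lemma is_epi_opposite [simp]: "is_epi (opposite_cat C) f A B \<longleftrightarrow> is_mono C f B A"
  by (auto simp: is_mono_def is_epi_def)

lemma is_zero_obj_opposite [simp]: "is_zero_obj (opposite_cat C) = is_zero_obj C"
  by (auto simp: is_zero_obj_def)

lemma is_zero_mor_opposite [simp]: "is_zero_mor (opposite_cat C) f A B \<longleftrightarrow> is_zero_mor C f B A"
  by (auto simp: is_zero_mor_def)

lemma is_kernel_opposite [simp]:
  "is_kernel (opposite_cat C) k K A g B \<longleftrightarrow> is_cokernel C k A K g B"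
  by (auto simp: is_kernel_def is_cokernel_def)

lemma is_cokernel_opposite [simp]:
  "is_cokernel (opposite_cat C) c B Q g A \<longleftrightarrow> is_kernel C c Q B g A"
  by (auto simp: is_kernel_def is_cokernel_def)

lemma short_exact_opposite [simp]:
  "short_exact (opposite_cat C) N g M f L \<longleftrightarrow> short_exact C L f M g N"
  by (auto simp: short_exact_def)

lemma cls_mult_opposite [simp]: "cls_mult (opposite_cat C) X Y = cls_mult C Y X"
  by (auto simp: cls_mult_def)

lemma cls_sub_opposite [simp]: "cls_sub (opposite_cat C) X = cls_quot C X"
  by (auto simp: cls_sub_def cls_quot_def)

lemma is_category_opposite: "is_category C \<Longrightarrow> is_category (opposite_cat C)"
  unfolding is_category_def opposite_cat_simps
  by (elim conjE, intro conjI; metis)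

lemma abelian_category_opposite: "abelian_category C \<Longrightarrow> abelian_category (opposite_cat C)"
  unfolding abelian_category_def
  by (simp add: is_category_opposite has_product_def has_coproduct_def)

definition is_iso :: "('o, 'm, 'x) category_scheme \<Rightarrow> 'm \<Rightarrow> 'o \<Rightarrow> 'o \<Rightarrow> bool" where
  "is_iso C f A B \<longleftrightarrow> A \<in> obj C \<and> B \<in> obj C \<and> f \<in> hom C A B \<and>
     (\<exists>g\<in>hom C B A. cmp C g f = idm C A \<and> cmp C f g = idm C B)"

lemma is_iso_opposite [simp]: "is_iso (opposite_cat C) f A B \<longleftrightarrow> is_iso C f B A"
  by (auto simp: is_iso_def)

locale cat =
  fixes C :: "('o, 'm) category"
  assumes category: "is_category C"
begin

lemma cat_opposite: "cat (opposite_cat C)"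
  by unfold_locales (rule is_category_opposite[OF category])

lemma cmp_in_hom:
  "f \<in> hom C A B \<Longrightarrow> g \<in> hom C B D \<Longrightarrow> A \<in> obj C \<Longrightarrow> B \<in> obj C \<Longrightarrow> D \<in> obj C \<Longrightarrow>
   cmp C g f \<in> hom C A D"
  using category unfolding is_category_def by blast

lemma cmp_assoc:
  "f \<in> hom C A B \<Longrightarrow> g \<in> hom C B D \<Longrightarrow> h \<in> hom C D E \<Longrightarrow>
   A \<in> obj C \<Longrightarrow> B \<in> obj C \<Longrightarrow> D \<in> obj C \<Longrightarrow> E \<in> obj C \<Longrightarrow>
   cmp C h (cmp C g f) = cmp C (cmp C h g) f"
  using category unfolding is_category_def by blast

lemma idm_in_hom: "A \<in> obj C \<Longrightarrow> idm C A \<in> hom C A A"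
  using category unfolding is_category_def by blast

lemma cmp_idm_left: "f \<in> hom C A B \<Longrightarrow> A \<in> obj C \<Longrightarrow> B \<in> obj C \<Longrightarrow> cmp C (idm C B) f = f"
  using category unfolding is_category_def by blast

lemma cmp_idm_right: "f \<in> hom C A B \<Longrightarrow> A \<in> obj C \<Longrightarrow> B \<in> obj C \<Longrightarrow> cmp C f (idm C A) = f"
  using category unfolding is_category_def by blast

lemma zero_obj_in_obj: "is_zero_obj C Z \<Longrightarrow> Z \<in> obj C"
  by (simp add: is_zero_obj_def)

lemma ex_hom_from_zero_obj: "is_zero_obj C Z \<Longrightarrow> X \<in> obj C \<Longrightarrow> \<exists>f. f \<in> hom C Z X"
  unfolding is_zero_obj_def by blast

lemma ex_hom_to_zero_obj: "is_zero_obj C Z \<Longrightarrow> X \<in> obj C \<Longrightarrow> \<exists>f. f \<in> hom C X Z"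
  unfolding is_zero_obj_def by blast

lemma hom_from_zero_obj_unique:
  "is_zero_obj C Z \<Longrightarrow> X \<in> obj C \<Longrightarrow> f \<in> hom C Z X \<Longrightarrow> g \<in> hom C Z X \<Longrightarrow> f = g"
  unfolding is_zero_obj_def by blast

lemma hom_to_zero_obj_unique:
  "is_zero_obj C Z \<Longrightarrow> X \<in> obj C \<Longrightarrow> f \<in> hom C X Z \<Longrightarrow> g \<in> hom C X Z \<Longrightarrow> f = g"
  unfolding is_zero_obj_def by blast

lemma is_zero_mor_in_hom: "is_zero_mor C f A B \<Longrightarrow> f \<in> hom C A B"
  by (simp add: is_zero_mor_def)

lemma is_zero_mor_unique:
  assumes f: "is_zero_mor C f A B" and f': "is_zero_mor C f' A B" and A: "A \<in> obj C" and B: "B \<in> obj C"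
  shows "f = f'"
proof -
  obtain Z g h where Z: "is_zero_obj C Z" and gh: "g \<in> hom C A Z" "h \<in> hom C Z B" "f = cmp C h g"
    using f unfolding is_zero_mor_def by blast
  obtain Z' g' h' where Z': "is_zero_obj C Z'" and gh': "g' \<in> hom C A Z'" "h' \<in> hom C Z' B" "f' = cmp C h' g'"
    using f' unfolding is_zero_mor_def by blast
  have ZZ': "Z \<in> obj C" "Z' \<in> obj C" using Z Z' zero_obj_in_obj by auto
  obtain i where i: "i \<in> hom C Z Z'" using ex_hom_from_zero_obj[OF Z ZZ'(2)] by blast
  have "h = cmp C h' i"
    by (rule hom_from_zero_obj_unique[OF Z B gh(2) cmp_in_hom[OF i gh'(2) ZZ' B]])
  moreover have "g' = cmp C i g"
    by (rule hom_to_zero_obj_unique[OF Z' A gh'(1) cmp_in_hom[OF gh(1) i A ZZ']])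
  ultimately show ?thesis
    using gh(3) gh'(3) cmp_assoc[OF gh(1) i gh'(2) A ZZ' B] by simp
qed

lemma is_zero_mor_to_zero_obj:
  assumes Z: "is_zero_obj C B" and f: "f \<in> hom C A B" and A: "A \<in> obj C"
  shows "is_zero_mor C f A B"
proof -
  have B: "B \<in> obj C" by (rule zero_obj_in_obj[OF Z])
  have "f = cmp C (idm C B) f" using cmp_idm_left[OF f A B] by simp
  then show ?thesis unfolding is_zero_mor_def using Z f idm_in_hom[OF B] by blast
qed

lemma is_zero_mor_postcmp:
  assumes f: "is_zero_mor C f A B" and h: "h \<in> hom C B D"
    and A: "A \<in> obj C" and B: "B \<in> obj C" and D: "D \<in> obj C"
  shows "is_zero_mor C (cmp C h f) A D"
proof -
  obtain Z g k where Z: "is_zero_obj C Z" and gk: "g \<in> hom C A Z" "k \<in> hom C Z B" "f = cmp C k g"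
    using f unfolding is_zero_mor_def by blast
  have Z_obj: "Z \<in> obj C" using Z zero_obj_in_obj by auto
  have "cmp C h f = cmp C (cmp C h k) g"
    using gk(3) cmp_assoc[OF gk(1,2) h A Z_obj B D] by simp
  then show ?thesis
    unfolding is_zero_mor_def
    using Z gk(1) cmp_in_hom[OF gk(2) h Z_obj B D] cmp_in_hom[OF is_zero_mor_in_hom[OF f] h A B D]
    by blast
qed

lemma is_zero_mor_precmp:
  assumes f: "is_zero_mor C f A B" and g: "g \<in> hom C X A"
    and X: "X \<in> obj C" and A: "A \<in> obj C" and B: "B \<in> obj C"
  shows "is_zero_mor C (cmp C f g) X B"
  using cat.is_zero_mor_postcmp[OF cat_opposite, of f B A g X] assms by simp

lemma is_monoD: "is_mono C f A B \<Longrightarrow> A \<in> obj C \<and> B \<in> obj C \<and> f \<in> hom C A B"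
  by (simp add: is_mono_def)

lemma is_mono_cancel:
  "is_mono C f A B \<Longrightarrow> X \<in> obj C \<Longrightarrow> g \<in> hom C X A \<Longrightarrow> h \<in> hom C X A \<Longrightarrow>
   cmp C f g = cmp C f h \<Longrightarrow> g = h"
  unfolding is_mono_def by blast

lemma is_epiD: "is_epi C f A B \<Longrightarrow> A \<in> obj C \<and> B \<in> obj C \<and> f \<in> hom C A B"
  by (simp add: is_epi_def)

lemma is_epi_cancel:
  "is_epi C f A B \<Longrightarrow> X \<in> obj C \<Longrightarrow> g \<in> hom C B X \<Longrightarrow> h \<in> hom C B X \<Longrightarrow>
   cmp C g f = cmp C h f \<Longrightarrow> g = h"
  unfolding is_epi_def by blast

lemma is_mono_if_left_inverse:
  assumes f: "f \<in> hom C A B" and r: "r \<in> hom C B A" and A: "A \<in> obj C" and B: "B \<in> obj C"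
    and rf: "cmp C r f = idm C A"
  shows "is_mono C f A B"
  unfolding is_mono_def
proof (intro conjI ballI allI impI)
  fix X g h assume X: "X \<in> obj C" and g: "g \<in> hom C X A" and h: "h \<in> hom C X A"
    and fg: "cmp C f g = cmp C f h"
  have "g = cmp C (cmp C r f) g" using cmp_idm_left[OF g X A] rf by simp
  also have "\<dots> = cmp C (cmp C r f) h" using fg cmp_assoc[OF g f r X A B A] cmp_assoc[OF h f r X A B A] by simp
  also have "\<dots> = h" using cmp_idm_left[OF h X A] rf by simp
  finally show "g = h" .
qed (use assms in auto)

lemma is_mono_cmp:
  assumes f: "is_mono C f A B" and g: "is_mono C g B D"
  shows "is_mono C (cmp C g f) A D"
  unfolding is_mono_def
proof (intro conjI ballI allI impI)
  have A: "A \<in> obj C" and B: "B \<in> obj C" and D: "D \<in> obj C"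
    and fh: "f \<in> hom C A B" and gh: "g \<in> hom C B D"
    using f g by (auto dest: is_monoD)
  show "A \<in> obj C" "D \<in> obj C" "cmp C g f \<in> hom C A D" using A D cmp_in_hom[OF fh gh A B D] by auto
  fix X x y assume X: "X \<in> obj C" and x: "x \<in> hom C X A" and y: "y \<in> hom C X A"
    and eq: "cmp C (cmp C g f) x = cmp C (cmp C g f) y"
  have "cmp C g (cmp C f x) = cmp C g (cmp C f y)"
    using eq cmp_assoc[OF x fh gh X A B D] cmp_assoc[OF y fh gh X A B D] by simp
  then have "cmp C f x = cmp C f y"
    by (rule is_mono_cancel[OF g X cmp_in_hom[OF x fh X A B] cmp_in_hom[OF y fh X A B]])
  then show "x = y" by (rule is_mono_cancel[OF f X x y])
qed

lemma is_mono_of_cmp: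
  assumes gf: "is_mono C (cmp C g f) A D" and f: "f \<in> hom C A B" and g: "g \<in> hom C B D"
    and B: "B \<in> obj C"
  shows "is_mono C f A B"
  unfolding is_mono_def
proof (intro conjI ballI allI impI)
  have A: "A \<in> obj C" and D: "D \<in> obj C" using gf by (auto dest: is_monoD)
  show "A \<in> obj C" "B \<in> obj C" "f \<in> hom C A B" using A B f by auto
  fix X x y assume X: "X \<in> obj C" and x: "x \<in> hom C X A" and y: "y \<in> hom C X A"
    and eq: "cmp C f x = cmp C f y"
  have "cmp C (cmp C g f) x = cmp C (cmp C g f) y"
    using eq cmp_assoc[OF x f g X A B D] cmp_assoc[OF y f g X A B D] by simp
  then show "x = y" by (rule is_mono_cancel[OF gf X x y])
qed

lemma is_epi_of_cmp:
  "is_epi C (cmp C g f) A D \<Longrightarrow> f \<in> hom C A B \<Longrightarrow> g \<in> hom C B D \<Longrightarrow> B \<in> obj C \<Longrightarrow>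
   is_epi C g B D"
  using cat.is_mono_of_cmp[OF cat_opposite, of f g D A B] by simp

lemma is_kernelD:
  assumes "is_kernel C k K A g B"
  shows "K \<in> obj C" "A \<in> obj C" "B \<in> obj C" "k \<in> hom C K A" "g \<in> hom C A B"
    "is_zero_mor C (cmp C g k) K B"
  using assms unfolding is_kernel_def by simp_all

lemma is_kernel_lift_unique:
  "is_kernel C k K A g B \<Longrightarrow> X \<in> obj C \<Longrightarrow> u \<in> hom C X A \<Longrightarrow> is_zero_mor C (cmp C g u) X B \<Longrightarrow>
   \<exists>!v. v \<in> hom C X K \<and> cmp C k v = u"
  unfolding is_kernel_def by simp

lemma is_kernel_liftE:
  assumes "is_kernel C k K A g B" "X \<in> obj C" "u \<in> hom C X A" "is_zero_mor C (cmp C g u) X B"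
  obtains v where "v \<in> hom C X K" "cmp C k v = u"
  using is_kernel_lift_unique[OF assms] by blast

lemma is_cokernelD:
  assumes "is_cokernel C c B Q g A"
  shows "A \<in> obj C" "B \<in> obj C" "Q \<in> obj C" "c \<in> hom C B Q" "g \<in> hom C A B"
    "is_zero_mor C (cmp C c g) A Q"
  using assms unfolding is_cokernel_def by simp_all

lemma is_cokernel_descE:
  assumes "is_cokernel C c B Q g A" "X \<in> obj C" "u \<in> hom C B X" "is_zero_mor C (cmp C u g) A X"
  obtains v where "v \<in> hom C Q X" "cmp C v c = u"
  using assms unfolding is_cokernel_def by blast

lemma kernel_is_mono:
  assumes k: "is_kernel C k K A g B"
  shows "is_mono C k K A"
  unfolding is_mono_def
proof (intro conjI ballI allI impI)
  note K = is_kernelD(1)[OF k] and A = is_kernelD(2)[OF k] and B = is_kernelD(3)[OF k]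
    and kh = is_kernelD(4)[OF k] and gh = is_kernelD(5)[OF k] and gk = is_kernelD(6)[OF k]
  show "K \<in> obj C" "A \<in> obj C" "k \<in> hom C K A" by fact+
  fix X x y assume X: "X \<in> obj C" and x: "x \<in> hom C X K" and y: "y \<in> hom C X K"
    and eq: "cmp C k x = cmp C k y"
  have "is_zero_mor C (cmp C g (cmp C k x)) X B"
    using is_zero_mor_precmp[OF gk x X K B] cmp_assoc[OF x kh gh X K A B] by simp
  then have "\<exists>!v. v \<in> hom C X K \<and> cmp C k v = cmp C k x"
    by (rule is_kernel_lift_unique[OF k X cmp_in_hom[OF x kh X K A]])
  then show "x = y" using x y eq by (metis (no_types, lifting))
qed

lemma cokernel_is_epi: "is_cokernel C c B Q g A \<Longrightarrow> is_epi C c B Q"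
  using cat.kernel_is_mono[OF cat_opposite, of c Q B g A] by simp

lemma short_exactD:
  "short_exact C L f M g N \<Longrightarrow> is_kernel C f L M g N"
  "short_exact C L f M g N \<Longrightarrow> is_cokernel C g M N f L"
  by (simp_all add: short_exact_def)

lemma is_kernel_cmp_mono:
  assumes ker: "is_kernel C (cmp C i j) X M c B" and i: "is_mono C i A M" and j: "j \<in> hom C X A"
  shows "is_kernel C j X A (cmp C c i) B"
  unfolding is_kernel_def
proof (intro conjI ballI allI impI)
  note X = is_kernelD(1)[OF ker] and B = is_kernelD(3)[OF ker] and ch = is_kernelD(5)[OF ker]
    and c_ij = is_kernelD(6)[OF ker]
  have A: "A \<in> obj C" and M: "M \<in> obj C" and ih: "i \<in> hom C A M" using is_monoD[OF i] by auto
  show "X \<in> obj C" "A \<in> obj C" "B \<in> obj C" "j \<in> hom C X A" by fact+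
  show cih: "cmp C c i \<in> hom C A B" by (rule cmp_in_hom[OF ih ch A M B])
  show "is_zero_mor C (cmp C (cmp C c i) j) X B"
    using c_ij cmp_assoc[OF j ih ch X A M B] by simp
  fix V x assume V: "V \<in> obj C" and x: "x \<in> hom C V A" and cix: "is_zero_mor C (cmp C (cmp C c i) x) V B"
  have ixh: "cmp C i x \<in> hom C V M" by (rule cmp_in_hom[OF x ih V A M])
  have "is_zero_mor C (cmp C c (cmp C i x)) V B" using cix cmp_assoc[OF x ih ch V A M B] by simp
  then obtain y where y: "y \<in> hom C V X" "cmp C (cmp C i j) y = cmp C i x"
    by (rule is_kernel_liftE[OF ker V ixh])
  have "cmp C i (cmp C j y) = cmp C i x" using y(2) cmp_assoc[OF y(1) j ih V X A M] by simp
  then have jy: "cmp C j y = x" by (rule is_mono_cancel[OF i V cmp_in_hom[OF y(1) j V X A] x])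
  have j_mono: "is_mono C j X A"
    by (rule is_mono_of_cmp[OF kernel_is_mono[OF ker] j ih A])
  show "\<exists>!y. y \<in> hom C V X \<and> cmp C j y = x"
  proof (rule ex1I[of _ y])
    show "y \<in> hom C V X \<and> cmp C j y = x" using y(1) jy by simp
    fix y' assume "y' \<in> hom C V X \<and> cmp C j y' = x"
    then show "y' = y" using is_mono_cancel[OF j_mono V, of y' y] y(1) jy by simp
  qed
qed

lemma is_iso_idm:
  assumes A: "A \<in> obj C"
  shows "is_iso C (idm C A) A A"
proof -
  have "cmp C (idm C A) (idm C A) = idm C A" by (rule cmp_idm_left[OF idm_in_hom[OF A] A A])
  then show ?thesis unfolding is_iso_def using A idm_in_hom[OF A] by blast
qed

lemma is_iso_inverseE:
  assumes "is_iso C f A B"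
  obtains g where "is_iso C g B A" "cmp C g f = idm C A" "cmp C f g = idm C B"
  using assms unfolding is_iso_def by blast

lemma is_iso_is_mono: "is_iso C f A B \<Longrightarrow> is_mono C f A B"
  unfolding is_iso_def using is_mono_if_left_inverse by blast

lemma is_iso_between_zero_objs:
  assumes Z: "is_zero_obj C Z" and Z': "is_zero_obj C Z'" and f: "f \<in> hom C Z Z'"
  shows "is_iso C f Z Z'"
proof -
  have Z_obj: "Z \<in> obj C" and Z'_obj: "Z' \<in> obj C" using Z Z' zero_obj_in_obj by auto
  obtain g where g: "g \<in> hom C Z' Z" using ex_hom_from_zero_obj[OF Z' Z_obj] by blast
  have "cmp C g f = idm C Z"
    by (rule hom_from_zero_obj_unique[OF Z Z_obj cmp_in_hom[OF f g Z_obj Z'_obj Z_obj] idm_in_hom[OF Z_obj]])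
  moreover have "cmp C f g = idm C Z'"
    by (rule hom_from_zero_obj_unique[OF Z' Z'_obj cmp_in_hom[OF g f Z'_obj Z_obj Z'_obj] idm_in_hom[OF Z'_obj]])
  ultimately show ?thesis unfolding is_iso_def using Z_obj Z'_obj f g by blast
qed

lemma is_zero_obj_iso:
  assumes L: "is_zero_obj C L" and f: "is_iso C f L M"
  shows "is_zero_obj C M"
proof -
  obtain g where g: "is_iso C g M L" and fg: "cmp C f g = idm C M" by (rule is_iso_inverseE[OF f])
  have L_obj: "L \<in> obj C" and M: "M \<in> obj C" and fh: "f \<in> hom C L M" and gh: "g \<in> hom C M L"
    using f g unfolding is_iso_def by auto
  show ?thesis unfolding is_zero_obj_def
  proof (intro conjI ballI)
    show "M \<in> obj C" by fact
    fix X assume X: "X \<in> obj C"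
    obtain a where a: "a \<in> hom C L X" using ex_hom_from_zero_obj[OF L X] by blast
    obtain b where b: "b \<in> hom C X L" using ex_hom_to_zero_obj[OF L X] by blast
    show "\<exists>!h. h \<in> hom C M X"
    proof (rule ex1I[of _ "cmp C a g"])
      show "cmp C a g \<in> hom C M X" by (rule cmp_in_hom[OF gh a M L_obj X])
      fix h assume h: "h \<in> hom C M X"
      have "h = cmp C (cmp C h f) g" using cmp_idm_right[OF h M X] fg cmp_assoc[OF gh fh h M L_obj M X] by simp
      also have "cmp C h f = a" by (rule hom_from_zero_obj_unique[OF L X cmp_in_hom[OF fh h L_obj M X] a])
      finally show "h = cmp C a g" .
    qed
    show "\<exists>!h. h \<in> hom C X M"
    proof (rule ex1I[of _ "cmp C f b"])
      show "cmp C f b \<in> hom C X M" by (rule cmp_in_hom[OF b fh X L_obj M])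
      fix h assume h: "h \<in> hom C X M"
      have "h = cmp C f (cmp C g h)" using cmp_idm_left[OF h X M] fg cmp_assoc[OF h gh fh X M L_obj M] by simp
      also have "cmp C g h = b" by (rule hom_to_zero_obj_unique[OF L X cmp_in_hom[OF h gh X M L_obj] b])
      finally show "h = cmp C f b" .
    qed
  qed
qed

lemma short_exact_zero_right_is_iso:
  assumes ses: "short_exact C L f M g Z" and Z: "is_zero_obj C Z"
  shows "is_iso C f L M"
proof -
  note f_ker = short_exactD(1)[OF ses]
  note L = is_kernelD(1)[OF f_ker] and M = is_kernelD(2)[OF f_ker] and Z_obj = is_kernelD(3)[OF f_ker]
    and fh = is_kernelD(4)[OF f_ker] and gh = is_kernelD(5)[OF f_ker]
  have "is_zero_mor C (cmp C g (idm C M)) M Z"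
    by (rule is_zero_mor_to_zero_obj[OF Z cmp_in_hom[OF idm_in_hom[OF M] gh M M Z_obj] M])
  then obtain v where v: "v \<in> hom C M L" "cmp C f v = idm C M"
    by (rule is_kernel_liftE[OF f_ker M idm_in_hom[OF M]])
  have "cmp C f (cmp C v f) = cmp C f (idm C L)"
    using cmp_assoc[OF fh v(1) fh L M L M] v(2) cmp_idm_left[OF fh L M] cmp_idm_right[OF fh L M] by simp
  then have "cmp C v f = idm C L"
    by (rule is_mono_cancel[OF kernel_is_mono[OF f_ker] L cmp_in_hom[OF fh v(1) L M L] idm_in_hom[OF L]])
  then show ?thesis unfolding is_iso_def using L M fh v by blast
qed

end

locale abelian_cat = cat +
  assumes abelian: "abelian_category C"
begin

lemma abelian_cat_opposite: "abelian_cat (opposite_cat C)"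
  using cat_opposite abelian_category_opposite[OF abelian]
  by (simp add: abelian_cat_def abelian_cat_axioms_def)

lemma ex_zero_obj: "\<exists>Z. is_zero_obj C Z"
  using abelian by (simp add: abelian_category_def)

lemma ex_is_zero_mor:
  assumes A: "A \<in> obj C" and B: "B \<in> obj C"
  shows "\<exists>f. is_zero_mor C f A B"
proof -
  obtain Z where Z: "is_zero_obj C Z" using ex_zero_obj by blast
  obtain g where g: "g \<in> hom C A Z" using ex_hom_to_zero_obj[OF Z A] by blast
  obtain h where h: "h \<in> hom C Z B" using ex_hom_from_zero_obj[OF Z B] by blast
  have "is_zero_mor C (cmp C h g) A B"
    unfolding is_zero_mor_def using Z g h cmp_in_hom[OF g h A zero_obj_in_obj[OF Z] B] by blast
  then show ?thesis by blast
qed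

lemma ex_kernelE:
  assumes "f \<in> hom C A B" "A \<in> obj C" "B \<in> obj C"
  obtains K k where "is_kernel C k K A f B"
  using abelian assms unfolding abelian_category_def by blast

lemma ex_cokernelE:
  assumes "f \<in> hom C A B" "A \<in> obj C" "B \<in> obj C"
  obtains Q c where "is_cokernel C c B Q f A"
  using abelian assms unfolding abelian_category_def by blast

lemma mono_is_kernelE:
  assumes "is_mono C f A B"
  obtains D g where "is_kernel C f A B g D"
  using abelian assms is_monoD[OF assms] unfolding abelian_category_def by blast

lemma productE:
  assumes "A \<in> obj C" "B \<in> obj C"
  obtains P p1 p2 where "P \<in> obj C" "p1 \<in> hom C P A" "p2 \<in> hom C P B"
    "\<And>X f g. X \<in> obj C \<Longrightarrow> f \<in> hom C X A \<Longrightarrow> g \<in> hom C X B \<Longrightarrow>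
       \<exists>!h. h \<in> hom C X P \<and> cmp C p1 h = f \<and> cmp C p2 h = g"
proof -
  have "has_product C A B" using abelian assms by (simp add: abelian_category_def)
  then obtain P p1 p2 where P: "P \<in> obj C" "p1 \<in> hom C P A" "p2 \<in> hom C P B"
    and pair: "\<forall>X\<in>obj C. \<forall>f g. f \<in> hom C X A \<longrightarrow> g \<in> hom C X B \<longrightarrow>
        (\<exists>!h. h \<in> hom C X P \<and> cmp C p1 h = f \<and> cmp C p2 h = g)"
    unfolding has_product_def by blast
  show ?thesis by (rule that[OF P]) (use pair in simp)
qed

lemma mono_is_kernel_of_cokernel:
  assumes m: "is_mono C m A B" and c: "is_cokernel C c B Q m A"
  shows "is_kernel C m A B c Q"
proof -
  note A = is_cokernelD(1)[OF c] and B = is_cokernelD(2)[OF c] and Q = is_cokernelD(3)[OF c]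
    and ch = is_cokernelD(4)[OF c] and mh = is_cokernelD(5)[OF c] and cm = is_cokernelD(6)[OF c]
  obtain D g where g: "is_kernel C m A B g D" by (rule mono_is_kernelE[OF m])
  note D = is_kernelD(3)[OF g] and gh = is_kernelD(5)[OF g] and gm = is_kernelD(6)[OF g]
  obtain v where v: "v \<in> hom C Q D" "cmp C v c = g" by (rule is_cokernel_descE[OF c D gh gm])
  show ?thesis unfolding is_kernel_def
  proof (intro conjI ballI allI impI)
    fix X u assume X: "X \<in> obj C" and u: "u \<in> hom C X B" and cu: "is_zero_mor C (cmp C c u) X Q"
    have "is_zero_mor C (cmp C g u) X D"
      using is_zero_mor_postcmp[OF cu v(1) X Q D] cmp_assoc[OF u ch v(1) X B Q D] v(2) by simp
    then show "\<exists>!v. v \<in> hom C X A \<and> cmp C m v = u" by (rule is_kernel_lift_unique[OF g X u])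
  qed (fact A B Q mh ch cm)+
qed

lemma short_exact_if_mono_cokernel:
  "is_mono C f L M \<Longrightarrow> is_cokernel C g M N f L \<Longrightarrow> short_exact C L f M g N"
  by (simp add: short_exact_def mono_is_kernel_of_cokernel)

lemma is_cokernel_descend:
  assumes p: "is_cokernel C p M D i A" and c: "is_epi C c M B" and q: "is_epi C q A Y"
    and w: "w \<in> hom C B D" and wc: "cmp C w c = p"
    and u: "u \<in> hom C Y B" and uq: "cmp C u q = cmp C c i"
  shows "is_cokernel C w B D u Y"
  unfolding is_cokernel_def
proof (intro conjI ballI allI impI)
  note A = is_cokernelD(1)[OF p] and M = is_cokernelD(2)[OF p] and D = is_cokernelD(3)[OF p]
    and ih = is_cokernelD(5)[OF p] and pi = is_cokernelD(6)[OF p]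
  have B: "B \<in> obj C" and ch: "c \<in> hom C M B" using is_epiD[OF c] by auto
  have Y: "Y \<in> obj C" and qh: "q \<in> hom C A Y" using is_epiD[OF q] by auto
  show "Y \<in> obj C" "B \<in> obj C" "D \<in> obj C" "w \<in> hom C B D" "u \<in> hom C Y B" by fact+
  have wuh: "cmp C w u \<in> hom C Y D" by (rule cmp_in_hom[OF u w Y B D])
  obtain z where z: "is_zero_mor C z Y D" using ex_is_zero_mor[OF Y D] by blast
  have "cmp C (cmp C w u) q = cmp C p i"
    using cmp_assoc[OF qh u w A Y B D] uq cmp_assoc[OF ih ch w A M B D] wc by simp
  then have "cmp C (cmp C w u) q = cmp C z q"
    using is_zero_mor_unique[OF pi is_zero_mor_precmp[OF z qh A Y D] A D] by simp
  then have "cmp C w u = z" by (rule is_epi_cancel[OF q D wuh is_zero_mor_in_hom[OF z]])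
  then show "is_zero_mor C (cmp C w u) Y D" using z by simp
  fix V y assume V: "V \<in> obj C" and y: "y \<in> hom C B V" and yu: "is_zero_mor C (cmp C y u) Y V"
  have ych: "cmp C y c \<in> hom C M V" by (rule cmp_in_hom[OF ch y M B V])
  have "cmp C (cmp C y c) i = cmp C (cmp C y u) q"
    using cmp_assoc[OF ih ch y A M B V] uq cmp_assoc[OF qh u y A Y B V] by simp
  then have "is_zero_mor C (cmp C (cmp C y c) i) A V" using is_zero_mor_precmp[OF yu qh A Y V] by simp
  then obtain x where x: "x \<in> hom C D V" and xp: "cmp C x p = cmp C y c" by (rule is_cokernel_descE[OF p V ych])
  have xwh: "cmp C x w \<in> hom C B V" by (rule cmp_in_hom[OF w x B D V])
  have "cmp C (cmp C x w) c = cmp C y c" using cmp_assoc[OF ch w x M B D V] wc xp by simp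
  then have xw: "cmp C x w = y" by (rule is_epi_cancel[OF c V xwh y])
  have w_epi: "is_epi C w B D"
    using is_epi_of_cmp[OF _ ch w B] cokernel_is_epi[OF p] wc by simp
  show "\<exists>!x. x \<in> hom C D V \<and> cmp C x w = y"
  proof (rule ex1I[of _ x])
    show "x \<in> hom C D V \<and> cmp C x w = y" using x xw by simp
    fix x' assume "x' \<in> hom C D V \<and> cmp C x' w = y"
    then show "x' = x" using is_epi_cancel[OF w_epi V, of x' x] x xw by simp
  qed
qed

lemma short_exact_iso_zero:
  assumes f: "is_iso C f L M" and Z: "is_zero_obj C Z" and g: "g \<in> hom C M Z"
  shows "short_exact C L f M g Z"
proof -
  obtain f' where f': "is_iso C f' M L" and ff': "cmp C f f' = idm C M" by (rule is_iso_inverseE[OF f])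
  have L: "L \<in> obj C" and M: "M \<in> obj C" and fh: "f \<in> hom C L M" and f'h: "f' \<in> hom C M L"
    using f f' unfolding is_iso_def by auto
  have Z_obj: "Z \<in> obj C" by (rule zero_obj_in_obj[OF Z])
  have "is_cokernel C g M Z f L" unfolding is_cokernel_def
  proof (intro conjI ballI allI impI)
    show "L \<in> obj C" "M \<in> obj C" "Z \<in> obj C" "g \<in> hom C M Z" "f \<in> hom C L M" by fact+
    show "is_zero_mor C (cmp C g f) L Z" by (rule is_zero_mor_to_zero_obj[OF Z cmp_in_hom[OF fh g L M Z_obj] L])
    fix X y assume X: "X \<in> obj C" and y: "y \<in> hom C M X" and yf: "is_zero_mor C (cmp C y f) L X"
    obtain a where a: "a \<in> hom C Z X" using ex_hom_from_zero_obj[OF Z X] by blast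
    show "\<exists>!a. a \<in> hom C Z X \<and> cmp C a g = y"
    proof (rule ex1I[of _ a])
      have "y = cmp C (cmp C y f) f'" using cmp_idm_right[OF y M X] ff' cmp_assoc[OF f'h fh y M L M X] by simp
      then have "is_zero_mor C y M X" using is_zero_mor_precmp[OF yf f'h M L X] by simp
      moreover have "is_zero_mor C (cmp C a g) M X"
        by (rule is_zero_mor_postcmp[OF is_zero_mor_to_zero_obj[OF Z g M] a M Z_obj X])
      ultimately show "a \<in> hom C Z X \<and> cmp C a g = y" using a is_zero_mor_unique[OF _ _ M X] by metis
      fix a' assume "a' \<in> hom C Z X \<and> cmp C a' g = y"
      then show "a' = a" using hom_from_zero_obj_unique[OF Z X _ a] by simp
    qed
  qed
  then show ?thesis by (rule short_exact_if_mono_cokernel[OF is_iso_is_mono[OF f]])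
qed

lemma short_exact_zero_iso:
  "is_zero_obj C Z \<Longrightarrow> z \<in> hom C Z M \<Longrightarrow> is_iso C v M L \<Longrightarrow> short_exact C Z z M v L"
  using abelian_cat.short_exact_iso_zero[OF abelian_cat_opposite, of v L M Z z] by simp

subsection \<open>Epimorphisms and images\<close>

lemma diagonal_is_kernelE:
  assumes X: "X \<in> obj C"
  obtains P p1 p2 d g D where "P \<in> obj C" "p1 \<in> hom C P X" "p2 \<in> hom C P X"
    "\<And>Y f f'. Y \<in> obj C \<Longrightarrow> f \<in> hom C Y X \<Longrightarrow> f' \<in> hom C Y X \<Longrightarrow>
       \<exists>!h. h \<in> hom C Y P \<and> cmp C p1 h = f \<and> cmp C p2 h = f'"
    "cmp C p1 d = idm C X" "cmp C p2 d = idm C X" "is_kernel C d X P g D"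
proof -
  obtain P p1 p2 where P: "P \<in> obj C" "p1 \<in> hom C P X" "p2 \<in> hom C P X"
    and pair: "\<And>Y f f'. Y \<in> obj C \<Longrightarrow> f \<in> hom C Y X \<Longrightarrow> f' \<in> hom C Y X \<Longrightarrow>
       \<exists>!h. h \<in> hom C Y P \<and> cmp C p1 h = f \<and> cmp C p2 h = f'"
    by (rule productE[OF X X]) blast
  obtain d where d: "d \<in> hom C X P" "cmp C p1 d = idm C X" "cmp C p2 d = idm C X"
    using pair[OF X idm_in_hom[OF X] idm_in_hom[OF X]] by blast
  have "is_mono C d X P" by (rule is_mono_if_left_inverse[OF d(1) P(2) X P(1) d(2)])
  then obtain D g where "is_kernel C d X P g D" by (rule mono_is_kernelE)
  with P pair d(2,3) show ?thesis by (rule that)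
qed

lemma is_epi_if_zero_cancel:
  assumes e: "e \<in> hom C A I" and A: "A \<in> obj C" and I: "I \<in> obj C"
    and cancel: "\<And>D t. D \<in> obj C \<Longrightarrow> t \<in> hom C I D \<Longrightarrow> is_zero_mor C (cmp C t e) A D \<Longrightarrow>
      is_zero_mor C t I D"
  shows "is_epi C e A I"
  unfolding is_epi_def
proof (intro conjI ballI allI impI)
  show "A \<in> obj C" "I \<in> obj C" "e \<in> hom C A I" by fact+
  txt \<open>The diagonal \<open>d : X \<rightarrow> X \<times> X\<close> is a kernel of some \<open>g\<close>. If \<open>t e = t' e\<close>, then
    \<open>g \<langle>t, t'\<rangle> e = g d t e = 0\<close>, so \<open>g \<langle>t, t'\<rangle> = 0\<close> and \<open>\<langle>t, t'\<rangle>\<close> factors through \<open>d\<close>.\<close>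
  fix X t t' assume X: "X \<in> obj C" and t: "t \<in> hom C I X" and t': "t' \<in> hom C I X"
    and eq: "cmp C t e = cmp C t' e"
  obtain P p1 p2 d g D where P: "P \<in> obj C" "p1 \<in> hom C P X" "p2 \<in> hom C P X"
    and pair: "\<And>Y f f'. Y \<in> obj C \<Longrightarrow> f \<in> hom C Y X \<Longrightarrow> f' \<in> hom C Y X \<Longrightarrow>
       \<exists>!h. h \<in> hom C Y P \<and> cmp C p1 h = f \<and> cmp C p2 h = f'"
    and d: "cmp C p1 d = idm C X" "cmp C p2 d = idm C X" and ker: "is_kernel C d X P g D"
    by (rule diagonal_is_kernelE[OF X]) blast
  note D = is_kernelD(3)[OF ker] and dh = is_kernelD(4)[OF ker] and gh = is_kernelD(5)[OF ker]
    and gd = is_kernelD(6)[OF ker]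
  obtain h where h: "h \<in> hom C I P" "cmp C p1 h = t" "cmp C p2 h = t'"
    using pair[OF I t t'] by blast
  have te: "cmp C t e \<in> hom C A X" by (rule cmp_in_hom[OF e t A I X])
  have "cmp C h e \<in> hom C A P \<and> cmp C p1 (cmp C h e) = cmp C t e \<and> cmp C p2 (cmp C h e) = cmp C t e"
    using cmp_in_hom[OF e h(1) A I P(1)] cmp_assoc[OF e h(1) P(2) A I P(1) X]
      cmp_assoc[OF e h(1) P(3) A I P(1) X] h(2,3) eq by simp
  moreover have "cmp C d (cmp C t e) \<in> hom C A P \<and>
      cmp C p1 (cmp C d (cmp C t e)) = cmp C t e \<and> cmp C p2 (cmp C d (cmp C t e)) = cmp C t e"
    using cmp_in_hom[OF te dh A X P(1)] cmp_assoc[OF te dh P(2) A X P(1) X]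
      cmp_assoc[OF te dh P(3) A X P(1) X] d cmp_idm_left[OF te A X] by simp
  ultimately have he: "cmp C h e = cmp C d (cmp C t e)"
    using pair[OF A te te] by (metis (no_types, lifting))
  have "cmp C (cmp C g h) e = cmp C (cmp C g d) (cmp C t e)"
    using he cmp_assoc[OF e h(1) gh A I P(1) D] cmp_assoc[OF te dh gh A X P(1) D] by simp
  then have "is_zero_mor C (cmp C (cmp C g h) e) A D"
    using is_zero_mor_precmp[OF gd te A X D] by simp
  then have "is_zero_mor C (cmp C g h) I D" by (rule cancel[OF D cmp_in_hom[OF h(1) gh I P(1) D]])
  then obtain s where s: "s \<in> hom C I X" "cmp C d s = h" by (rule is_kernel_liftE[OF ker I h(1)])
  have "t = s"
    using h(2) s(2) cmp_assoc[OF s(1) dh P(2) I X P(1) X] d(1) cmp_idm_left[OF s(1) I X] by simp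
  moreover have "t' = s"
    using h(3) s(2) cmp_assoc[OF s(1) dh P(3) I X P(1) X] d(2) cmp_idm_left[OF s(1) I X] by simp
  ultimately show "t = t'" by simp
qed

lemma epi_onto_image:
  assumes f: "f \<in> hom C A B" and c: "is_cokernel C c B Q f A" and m: "is_kernel C m I B c Q"
    and e: "e \<in> hom C A I" and f_eq: "f = cmp C m e"
  shows "is_epi C e A I"
proof -
  note A = is_cokernelD(1)[OF c] and B = is_cokernelD(2)[OF c] and Q = is_cokernelD(3)[OF c]
    and ch = is_cokernelD(4)[OF c]
  note I = is_kernelD(1)[OF m] and mh = is_kernelD(4)[OF m] and cm = is_kernelD(6)[OF m]
  txt \<open>If \<open>t e = 0\<close>, then \<open>f\<close> factors through the subobject \<open>m (ker t)\<close> of \<open>B\<close>, which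
    therefore contains the image \<open>m\<close>; so \<open>ker t \<rightarrow> I\<close> has a right inverse and \<open>t = 0\<close>.\<close>
  show ?thesis
  proof (rule is_epi_if_zero_cancel[OF e A I])
    fix D t assume D: "D \<in> obj C" and t: "t \<in> hom C I D" and te: "is_zero_mor C (cmp C t e) A D"
    obtain K k where k: "is_kernel C k K I t D" by (rule ex_kernelE[OF t I D])
    note K = is_kernelD(1)[OF k] and kh = is_kernelD(4)[OF k] and tk = is_kernelD(6)[OF k]
    obtain e' where e': "e' \<in> hom C A K" "cmp C k e' = e" by (rule is_kernel_liftE[OF k A e te])
    have mk: "cmp C m k \<in> hom C K B" by (rule cmp_in_hom[OF kh mh K I B])
    obtain R c' where c': "is_cokernel C c' B R (cmp C m k) K" by (rule ex_cokernelE[OF mk K B])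
    note R = is_cokernelD(3)[OF c'] and c'h = is_cokernelD(4)[OF c'] and c'mk = is_cokernelD(6)[OF c']
    have mk_ker: "is_kernel C (cmp C m k) K B c' R"
      by (rule mono_is_kernel_of_cokernel[OF is_mono_cmp[OF kernel_is_mono[OF k] kernel_is_mono[OF m]] c'])
    have "cmp C c' f = cmp C (cmp C c' (cmp C m k)) e'"
      using f_eq e'(2) cmp_assoc[OF e'(1) kh mh A K I B] cmp_assoc[OF e'(1) mk c'h A K B R] by simp
    then have "is_zero_mor C (cmp C c' f) A R" using is_zero_mor_precmp[OF c'mk e'(1) A K R] by simp
    then obtain v where v: "v \<in> hom C Q R" "cmp C v c = c'" by (rule is_cokernel_descE[OF c R c'h])
    have "cmp C c' m = cmp C v (cmp C c m)" using v(2) cmp_assoc[OF mh ch v(1) I B Q R] by simp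
    then have "is_zero_mor C (cmp C c' m) I R" using is_zero_mor_postcmp[OF cm v(1) I Q R] by simp
    then obtain w where w: "w \<in> hom C I K" "cmp C (cmp C m k) w = m"
      by (rule is_kernel_liftE[OF mk_ker I mh])
    have "cmp C m (cmp C k w) = cmp C m (idm C I)"
      using cmp_assoc[OF w(1) kh mh I K I B] w(2) cmp_idm_right[OF mh I B] by simp
    then have kw: "cmp C k w = idm C I"
      by (rule is_mono_cancel[OF kernel_is_mono[OF m] I cmp_in_hom[OF w(1) kh I K I] idm_in_hom[OF I]])
    have "t = cmp C (cmp C t k) w" using cmp_idm_right[OF t I D] kw cmp_assoc[OF w(1) kh t I K I D] by simp
    then show "is_zero_mor C t I D" using is_zero_mor_precmp[OF tk w(1) I K D] by simp
  qed
qed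

lemma mono_from_coimage:
  assumes "f \<in> hom C A B" "is_kernel C k K A f B" "is_cokernel C c A I k K" "n \<in> hom C I B"
    "f = cmp C n c"
  shows "is_mono C n I B"
  using abelian_cat.epi_onto_image[OF abelian_cat_opposite, of f B A k K c I n] assms by simp

section \<open>Products of classes of objects\<close>

abbreviation cls_times (infixl "\<cdot>" 70) where "X \<cdot> Y \<equiv> cls_mult C X Y"

lemma cls_sub_cls_mult: "cls_sub C (S \<cdot> T) \<subseteq> cls_sub C S \<cdot> cls_sub C T"
proof
  fix M' assume "M' \<in> cls_sub C (S \<cdot> T)"
  then obtain M i L N f g where M': "M' \<in> obj C" and i: "is_mono C i M' M"
    and L: "L \<in> S" and N: "N \<in> T" and ses: "short_exact C L f M g N"
    unfolding cls_sub_def cls_mult_def by blast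
  note f_ker = short_exactD(1)[OF ses]
  note L_obj = is_kernelD(1)[OF f_ker] and M = is_kernelD(2)[OF f_ker] and N_obj = is_kernelD(3)[OF f_ker]
    and fh = is_kernelD(4)[OF f_ker] and gh = is_kernelD(5)[OF f_ker]
  have ih: "i \<in> hom C M' M" using is_monoD[OF i] by simp
  define h where "h = cmp C g i"
  have hh: "h \<in> hom C M' N" unfolding h_def by (rule cmp_in_hom[OF ih gh M' M N_obj])
  obtain L' k where k: "is_kernel C k L' M' h N" by (rule ex_kernelE[OF hh M' N_obj])
  note L' = is_kernelD(1)[OF k] and kh = is_kernelD(4)[OF k] and hk = is_kernelD(6)[OF k]
  obtain Q c where c: "is_cokernel C c M' Q k L'" by (rule ex_cokernelE[OF kh L' M'])
  have ses': "short_exact C L' k M' c Q" by (rule short_exact_if_mono_cokernel[OF kernel_is_mono[OF k] c])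
  have "is_zero_mor C (cmp C g (cmp C i k)) L' N"
    using hk cmp_assoc[OF kh ih gh L' M' M N_obj] unfolding h_def by simp
  then obtain a where a: "a \<in> hom C L' L" "cmp C f a = cmp C i k"
    by (rule is_kernel_liftE[OF f_ker L' cmp_in_hom[OF kh ih L' M' M]])
  have "is_mono C (cmp C i k) L' M" by (rule is_mono_cmp[OF kernel_is_mono[OF k] i])
  then have "is_mono C a L' L" using is_mono_of_cmp[OF _ a(1) fh L_obj] a(2) by simp
  then have L'_sub: "L' \<in> cls_sub C S" unfolding cls_sub_def using L' L by blast
  obtain n where n: "n \<in> hom C Q N" "cmp C n c = h" by (rule is_cokernel_descE[OF c N_obj hh hk])
  have "is_mono C n Q N" by (rule mono_from_coimage[OF hh k c n(1) n(2)[symmetric]])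
  then have Q_sub: "Q \<in> cls_sub C T" unfolding cls_sub_def using is_cokernelD(3)[OF c] N by blast
  show "M' \<in> cls_sub C S \<cdot> cls_sub C T"
    unfolding cls_mult_def using M' L'_sub Q_sub ses' by blast
qed

lemma cls_quot_cls_mult: "cls_quot C (S \<cdot> T) \<subseteq> cls_quot C S \<cdot> cls_quot C T"
  using abelian_cat.cls_sub_cls_mult[OF abelian_cat_opposite, of T S] by simp

lemma cls_mult_assoc_subset: "(X \<cdot> Y) \<cdot> Z \<subseteq> X \<cdot> (Y \<cdot> Z)"
proof
  fix M assume "M \<in> (X \<cdot> Y) \<cdot> Z"
  then obtain A N i p X1 Y1 j q where M: "M \<in> obj C" and ses1: "short_exact C A i M p N"
    and N: "N \<in> Z" and X1: "X1 \<in> X" and Y1: "Y1 \<in> Y" and ses2: "short_exact C X1 j A q Y1"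
    unfolding cls_mult_def by blast
  txt \<open>\<open>B = M/X1\<close> contains \<open>A/X1 = Y1\<close>, and \<open>B/Y1 \<cong> M/A = N\<close>.\<close>
  note i_ker = short_exactD(1)[OF ses1] and p_cok = short_exactD(2)[OF ses1]
    and j_ker = short_exactD(1)[OF ses2] and q_cok = short_exactD(2)[OF ses2]
  note A = is_kernelD(1)[OF i_ker] and N_obj = is_kernelD(3)[OF i_ker]
    and ih = is_kernelD(4)[OF i_ker] and ph = is_kernelD(5)[OF i_ker] and pi = is_kernelD(6)[OF i_ker]
  note X1_obj = is_kernelD(1)[OF j_ker] and jh = is_kernelD(4)[OF j_ker]
  have ijh: "cmp C i j \<in> hom C X1 M" by (rule cmp_in_hom[OF jh ih X1_obj A M])
  obtain B c where c: "is_cokernel C c M B (cmp C i j) X1" by (rule ex_cokernelE[OF ijh X1_obj M])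
  note B = is_cokernelD(3)[OF c] and ch = is_cokernelD(4)[OF c]
  have ses3: "short_exact C X1 (cmp C i j) M c B"
    by (rule short_exact_if_mono_cokernel[OF is_mono_cmp[OF kernel_is_mono[OF j_ker] kernel_is_mono[OF i_ker]] c])
  have j_ker': "is_kernel C j X1 A (cmp C c i) B"
    by (rule is_kernel_cmp_mono[OF short_exactD(1)[OF ses3] kernel_is_mono[OF i_ker] jh])
  obtain u where u: "u \<in> hom C Y1 B" "cmp C u q = cmp C c i"
    by (rule is_cokernel_descE[OF q_cok B is_kernelD(5)[OF j_ker'] is_kernelD(6)[OF j_ker']])
  have "is_zero_mor C (cmp C p (cmp C i j)) X1 N"
    using is_zero_mor_precmp[OF pi jh X1_obj A N_obj] cmp_assoc[OF jh ih ph X1_obj A M N_obj] by simp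
  then obtain w where w: "w \<in> hom C B N" "cmp C w c = p" by (rule is_cokernel_descE[OF c N_obj ph])
  have "is_mono C u Y1 B"
    by (rule mono_from_coimage[OF is_kernelD(5)[OF j_ker'] j_ker' q_cok u(1) u(2)[symmetric]])
  moreover have "is_cokernel C w B N u Y1"
    by (rule is_cokernel_descend[OF p_cok cokernel_is_epi[OF c] cokernel_is_epi[OF q_cok] w u])
  ultimately have "short_exact C Y1 u B w N" by (rule short_exact_if_mono_cokernel)
  then have "B \<in> Y \<cdot> Z" unfolding cls_mult_def using B Y1 N by blast
  then show "M \<in> X \<cdot> (Y \<cdot> Z)" unfolding cls_mult_def using M X1 ses3 by blast
qed

lemma cls_mult_assoc: "(X \<cdot> Y) \<cdot> Z = X \<cdot> (Y \<cdot> Z)"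
  using cls_mult_assoc_subset abelian_cat.cls_mult_assoc_subset[OF abelian_cat_opposite, of Z Y X]
  by (simp add: subset_antisym)

abbreviation zero_objs where "zero_objs \<equiv> {Z. is_zero_obj C Z}"

lemma cls_mult_mono: "X \<subseteq> X' \<Longrightarrow> Y \<subseteq> Y' \<Longrightarrow> X \<cdot> Y \<subseteq> X' \<cdot> Y'"
  unfolding cls_mult_def by blast

lemma cls_mult_subset_obj: "X \<cdot> Y \<subseteq> obj C"
  unfolding cls_mult_def by blast

lemma subset_cls_mult_zero_right:
  assumes X: "X \<subseteq> obj C" and Z: "Z \<in> Y" "is_zero_obj C Z"
  shows "X \<subseteq> X \<cdot> Y"
proof
  fix M assume MX: "M \<in> X"
  then have M: "M \<in> obj C" using X by auto
  obtain g where "g \<in> hom C M Z" using ex_hom_to_zero_obj[OF Z(2) M] by blast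
  then have "short_exact C M (idm C M) M g Z" by (rule short_exact_iso_zero[OF is_iso_idm[OF M] Z(2)])
  then show "M \<in> X \<cdot> Y" unfolding cls_mult_def using M MX Z(1) by blast
qed

lemma subset_cls_mult_zero_left: "X \<subseteq> obj C \<Longrightarrow> Z \<in> Y \<Longrightarrow> is_zero_obj C Z \<Longrightarrow> X \<subseteq> Y \<cdot> X"
  using abelian_cat.subset_cls_mult_zero_right[OF abelian_cat_opposite, of X Z Y] by simp

lemma cls_mult_zero_objs_commute: "X \<cdot> zero_objs \<subseteq> zero_objs \<cdot> X"
proof
  fix M assume "M \<in> X \<cdot> zero_objs"
  then obtain L f g Z where M: "M \<in> obj C" and L: "L \<in> X" and Z: "is_zero_obj C Z"
    and ses: "short_exact C L f M g Z"
    unfolding cls_mult_def by blast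
  obtain v where v: "is_iso C v M L" by (rule is_iso_inverseE[OF short_exact_zero_right_is_iso[OF ses Z]])
  obtain z where "z \<in> hom C Z M" using ex_hom_from_zero_obj[OF Z M] by blast
  then have "short_exact C Z z M v L" by (rule short_exact_zero_iso[OF Z _ v])
  then show "M \<in> zero_objs \<cdot> X" unfolding cls_mult_def using M L Z by blast
qed

lemma cls_mult_zero_objs: "zero_objs \<cdot> zero_objs \<subseteq> zero_objs"
proof
  fix M assume "M \<in> zero_objs \<cdot> zero_objs"
  then obtain L f g Z where L: "is_zero_obj C L" and Z: "is_zero_obj C Z"
    and ses: "short_exact C L f M g Z"
    unfolding cls_mult_def by blast
  show "M \<in> zero_objs" using is_zero_obj_iso[OF L short_exact_zero_right_is_iso[OF ses Z]] by simp
qed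

lemma cls_pow_mult_zero_objs: "cls_pow C X n \<cdot> zero_objs \<subseteq> cls_pow C X n"
proof (induction n)
  case 0
  show ?case using cls_mult_zero_objs by simp
next
  case (Suc n)
  have "cls_pow C X (Suc n) \<cdot> zero_objs = cls_pow C X n \<cdot> (X \<cdot> zero_objs)"
    by (simp add: cls_mult_assoc)
  also have "\<dots> \<subseteq> cls_pow C X n \<cdot> (zero_objs \<cdot> X)"
    by (rule cls_mult_mono[OF order_refl cls_mult_zero_objs_commute])
  also have "\<dots> = (cls_pow C X n \<cdot> zero_objs) \<cdot> X" by (simp add: cls_mult_assoc)
  also have "\<dots> \<subseteq> cls_pow C X n \<cdot> X" by (rule cls_mult_mono[OF Suc.IH order_refl])
  finally show ?case by simp
qed

lemma cls_pow_add: "cls_pow C X a \<cdot> cls_pow C X b \<subseteq> cls_pow C X (a + b)"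
proof (induction b)
  case 0
  show ?case using cls_pow_mult_zero_objs by simp
next
  case (Suc b)
  have "cls_pow C X a \<cdot> cls_pow C X (Suc b) = (cls_pow C X a \<cdot> cls_pow C X b) \<cdot> X"
    by (simp add: cls_mult_assoc)
  also have "\<dots> \<subseteq> cls_pow C X (a + b) \<cdot> X" by (rule cls_mult_mono[OF Suc.IH order_refl])
  finally show ?case by simp
qed

lemma cls_ext_mult_closed: "cls_ext C X \<cdot> cls_ext C X \<subseteq> cls_ext C X"
proof
  fix M assume "M \<in> cls_ext C X \<cdot> cls_ext C X"
  then obtain a b where "M \<in> cls_pow C X a \<cdot> cls_pow C X b"
    unfolding cls_mult_def cls_ext_def by blast
  then have "M \<in> cls_pow C X (a + b)" using cls_pow_add by blast
  then show "M \<in> cls_ext C X" unfolding cls_ext_def by blast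
qed

lemma cls_ext_least:
  assumes XY: "X \<subseteq> Y" and zeros: "zero_objs \<subseteq> Y" and YY: "Y \<cdot> Y \<subseteq> Y"
  shows "cls_ext C X \<subseteq> Y"
proof -
  have "cls_pow C X n \<subseteq> Y" for n
  proof (induction n)
    case 0
    show ?case using zeros by simp
  next
    case (Suc n)
    have "cls_pow C X n \<cdot> X \<subseteq> Y \<cdot> Y" by (rule cls_mult_mono[OF Suc.IH XY])
    then show ?case using YY by simp
  qed
  then show ?thesis unfolding cls_ext_def by blast
qed

lemma zero_objs_subset_cls_ext: "zero_objs \<subseteq> cls_ext C X"
  unfolding cls_ext_def by (metis UN_upper UNIV_I cls_pow.simps(1))

lemma subset_cls_ext:
  assumes X: "X \<subseteq> obj C"
  shows "X \<subseteq> cls_ext C X"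
proof -
  obtain Z where Z: "is_zero_obj C Z" using ex_zero_obj by blast
  have "X \<subseteq> zero_objs \<cdot> X" by (rule subset_cls_mult_zero_left[OF X _ Z]) (use Z in simp)
  also have "\<dots> = cls_pow C X 1" by simp
  also have "\<dots> \<subseteq> cls_ext C X" unfolding cls_ext_def by blast
  finally show ?thesis .
qed

lemma cls_ext_cls_mult_commute:
  assumes S: "S \<subseteq> obj C" and T: "T \<subseteq> obj C"
    and ZS: "Z \<in> S" "is_zero_obj C Z" and ZT: "Z' \<in> T" "is_zero_obj C Z'"
  shows "cls_ext C (S \<cdot> T) = cls_ext C (T \<cdot> S)"
proof -
  have swap: "cls_ext C (X \<cdot> Y) \<subseteq> cls_ext C (Y \<cdot> X)"
    if X: "X \<subseteq> obj C" and Y: "Y \<subseteq> obj C"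
      and ZX: "ZX \<in> X" "is_zero_obj C ZX" and ZY: "ZY \<in> Y" "is_zero_obj C ZY" for X Y ZX ZY
  proof (rule cls_ext_least)
    let ?E = "cls_ext C (Y \<cdot> X)"
    have "Y \<cdot> X \<subseteq> ?E" by (rule subset_cls_ext[OF cls_mult_subset_obj])
    then have "X \<subseteq> ?E" and "Y \<subseteq> ?E"
      using subset_cls_mult_zero_left[OF X ZY] subset_cls_mult_zero_right[OF Y ZX] by blast+
    then have "X \<cdot> Y \<subseteq> ?E \<cdot> ?E" by (rule cls_mult_mono)
    then show "X \<cdot> Y \<subseteq> ?E" using cls_ext_mult_closed by blast
    show "zero_objs \<subseteq> ?E" by (rule zero_objs_subset_cls_ext)
    show "?E \<cdot> ?E \<subseteq> ?E" by (rule cls_ext_mult_closed)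
  qed
  show ?thesis using swap[OF S T ZS ZT] swap[OF T S ZT ZS] by blast
qed

lemma cls_ext_eq_if_ext_closed:
  assumes T: "ext_closed C T" and Z: "Z \<in> T" "is_zero_obj C Z"
  shows "cls_ext C T = T"
proof
  have TT: "T \<cdot> T = T" using T by (simp add: ext_closed_def)
  have "zero_objs \<subseteq> T"
  proof
    fix Z' assume "Z' \<in> zero_objs"
    then have Z': "is_zero_obj C Z'" by simp
    have Z_obj: "Z \<in> obj C" and Z'_obj: "Z' \<in> obj C" using Z(2) Z' zero_obj_in_obj by auto
    obtain f where f: "f \<in> hom C Z Z'" using ex_hom_from_zero_obj[OF Z(2) Z'_obj] by blast
    obtain g where g: "g \<in> hom C Z' Z" using ex_hom_to_zero_obj[OF Z(2) Z'_obj] by blast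
    have "short_exact C Z f Z' g Z"
      by (rule short_exact_iso_zero[OF is_iso_between_zero_objs[OF Z(2) Z' f] Z(2) g])
    then have "Z' \<in> T \<cdot> T" unfolding cls_mult_def using Z'_obj Z(1) by blast
    then show "Z' \<in> T" using TT by simp
  qed
  then show "cls_ext C T \<subseteq> T" using cls_ext_least[of T T] TT by simp
  have "T \<subseteq> obj C" using cls_mult_subset_obj[of T T] TT by simp
  then show "T \<subseteq> cls_ext C T" by (rule subset_cls_ext)
qed

lemma cls_mult_cls_ext_commute:
  assumes TS: "T \<cdot> S \<subseteq> cls_ext C S \<cdot> T"
  shows "T \<cdot> cls_ext C S \<subseteq> cls_ext C S \<cdot> T"
proof -
  let ?E = "cls_ext C S"
  have pow: "T \<cdot> cls_pow C S n \<subseteq> ?E \<cdot> T" for n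
  proof (induction n)
    case 0
    have "T \<cdot> zero_objs \<subseteq> zero_objs \<cdot> T" by (rule cls_mult_zero_objs_commute)
    also have "\<dots> \<subseteq> ?E \<cdot> T" by (rule cls_mult_mono[OF zero_objs_subset_cls_ext order_refl])
    finally show ?case by simp
  next
    case (Suc n)
    have "T \<cdot> cls_pow C S (Suc n) = (T \<cdot> cls_pow C S n) \<cdot> S" by (simp add: cls_mult_assoc)
    also have "\<dots> \<subseteq> (?E \<cdot> T) \<cdot> S" by (rule cls_mult_mono[OF Suc.IH order_refl])
    also have "\<dots> = ?E \<cdot> (T \<cdot> S)" by (rule cls_mult_assoc)
    also have "\<dots> \<subseteq> ?E \<cdot> (?E \<cdot> T)" by (rule cls_mult_mono[OF order_refl TS])
    also have "\<dots> = (?E \<cdot> ?E) \<cdot> T" by (rule cls_mult_assoc[symmetric])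
    also have "\<dots> \<subseteq> ?E \<cdot> T" by (rule cls_mult_mono[OF cls_ext_mult_closed order_refl])
    finally show ?case .
  qed
  show ?thesis
  proof
    fix M assume "M \<in> T \<cdot> ?E"
    then obtain n where "M \<in> T \<cdot> cls_pow C S n" unfolding cls_mult_def cls_ext_def by blast
    then show "M \<in> ?E \<cdot> T" using pow by blast
  qed
qed

lemma cls_ext_cls_mult_subset_if_commute:
  assumes S: "S \<subseteq> obj C" and T: "ext_closed C T" and Z: "Z \<in> T" "is_zero_obj C Z"
    and TS: "T \<cdot> S \<subseteq> cls_ext C S \<cdot> T"
  shows "cls_ext C (S \<cdot> T) \<subseteq> cls_ext C S \<cdot> T"
proof (rule cls_ext_least)
  let ?E = "cls_ext C S"
  show "S \<cdot> T \<subseteq> ?E \<cdot> T" by (rule cls_mult_mono[OF subset_cls_ext[OF S] order_refl])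
  have "zero_objs \<subseteq> zero_objs \<cdot> T" by (rule subset_cls_mult_zero_right[OF _ Z]) (auto simp: zero_obj_in_obj)
  also have "\<dots> \<subseteq> ?E \<cdot> T" by (rule cls_mult_mono[OF zero_objs_subset_cls_ext order_refl])
  finally show "zero_objs \<subseteq> ?E \<cdot> T" .
  have "(?E \<cdot> T) \<cdot> (?E \<cdot> T) = ?E \<cdot> ((T \<cdot> ?E) \<cdot> T)" by (simp add: cls_mult_assoc)
  also have "\<dots> \<subseteq> ?E \<cdot> ((?E \<cdot> T) \<cdot> T)"
    by (rule cls_mult_mono[OF order_refl cls_mult_mono[OF cls_mult_cls_ext_commute[OF TS] order_refl]])
  also have "\<dots> = (?E \<cdot> ?E) \<cdot> (T \<cdot> T)" by (simp add: cls_mult_assoc)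
  also have "\<dots> \<subseteq> ?E \<cdot> T"
    using T by (intro cls_mult_mono[OF cls_ext_mult_closed]) (simp add: ext_closed_def)
  finally show "(?E \<cdot> T) \<cdot> (?E \<cdot> T) \<subseteq> ?E \<cdot> T" .
qed

end

theorem proposition2p2:
  fixes C :: "('o, 'm) category" and S T :: "'o set"
  assumes "abelian_category C"
    and "S \<subseteq> obj C" and "T \<subseteq> obj C"
    and "\<exists>Z\<in>S. is_zero_obj C Z" and "\<exists>Z\<in>T. is_zero_obj C Z"
  shows "cls_sub C (cls_mult C S T) \<subseteq> cls_mult C (cls_sub C S) (cls_sub C T) \<and>
         cls_quot C (cls_mult C S T) \<subseteq> cls_mult C (cls_quot C S) (cls_quot C T) \<and>
         (cls_ext C (cls_mult C S T) \<subseteq> cls_mult C (cls_ext C S) (cls_ext C T)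
         \<longleftrightarrow> cls_ext C (cls_mult C T S) \<subseteq> cls_mult C (cls_ext C S) (cls_ext C T)) \<and>
         (ext_closed C T \<longrightarrow>
         (cls_ext C (cls_mult C S T) \<subseteq> cls_mult C (cls_ext C S) (cls_ext C T)
          \<longleftrightarrow> cls_mult C T S \<subseteq> cls_mult C (cls_ext C S) T))"
proof -
  interpret abelian_cat C
    using assms(1) by (simp add: abelian_cat_def abelian_cat_axioms_def cat_def abelian_category_def)
  obtain ZS where ZS: "ZS \<in> S" "is_zero_obj C ZS" using assms(4) by blast
  obtain ZT where ZT: "ZT \<in> T" "is_zero_obj C ZT" using assms(5) by blast
  have swap: "cls_ext C (cls_mult C S T) = cls_ext C (cls_mult C T S)"
    by (rule cls_ext_cls_mult_commute[OF assms(2,3) ZS ZT])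
  have "cls_ext C (cls_mult C S T) \<subseteq> cls_mult C (cls_ext C S) (cls_ext C T) \<longleftrightarrow>
      cls_mult C T S \<subseteq> cls_mult C (cls_ext C S) T" if T: "ext_closed C T"
  proof -
    have "cls_mult C T S \<subseteq> cls_ext C (cls_mult C S T)"
      unfolding swap by (rule subset_cls_ext[OF cls_mult_subset_obj])
    then show ?thesis
      unfolding cls_ext_eq_if_ext_closed[OF T ZT]
      using cls_ext_cls_mult_subset_if_commute[OF assms(2) T ZT] by blast
  qed
  with swap show ?thesis using cls_sub_cls_mult cls_quot_cls_mult by simp
qed

end
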